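(* Consider the networked SVIRS system below on a connected weighted undirected graph, with parameters $N>0$, $0<r<1$, $\mu>0$, $0\le p\le 1$, $\beta>0$, $\xi\ge 0$, $\eta\ge 0$, $0\le\sigma\le 1$, $\gamma\ge 0$, $0<\epsilon\le 1$. If $\mathcal{R}_0>1$, then the system has a unique spatially constant equilibrium $\mathbf{E}=(S_*,V_*,I_*,R_* )$ with $I_*>0$ (the endemic equilibrium).
   Context: Let $G=\langle \mathcal V,\mathcal E,\mathcal W\rangle$ be a connected weighted undirected graph without self-loops, $|\mathcal V|=n$, with weights $w(x,y)=w(y,x)>0$ for adjacent nodes $x\sim y$. For $F:\mathcal V\to\mathbb R$ define $\Delta F(x)=\sum_{y\in\mathcal V,\,y\sim x} w(x,y)\,[F(y)-F(x)]$. The SVIRS model is, for $(x,t)\in\mathcal V\times[0,\infty)$, $\frac{dS}{dt}-\epsilon\Delta S=\mu(1-r)N-(\mu+p)S-\beta SI+\xi V+\eta R$, $\frac{dV}{dt}-\epsilon\Delta V=\mu rN+pS-\beta\sigma VI-(\mu+\xi)V$, $\frac{dI}{dt}-\epsilon\Delta I=\beta SI+\beta\sigma VI-(\mu+\gamma)I$, $\frac{dR}{dt}-\epsilon\Delta R=\gamma I-(\mu+\eta)R$, with $S,V,I,R:\mathcal V\times[0,\infty)\to\mathbb R$. A spatially constant equilibrium is a constant (in $x$ and $t$) solution; for such, $\Delta$ of each component vanishes. The basic reproduction number is $\mathcal R_0=\dfrac{\beta\big((\xi+(1-r)\mu)+\sigma(p+\mu r)\big)N}{(\gamma+\mu)(\mu+p+\xi)}$.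 *)

theory Defs
  imports "HOL-Analysis.Analysis"
begin

definition weighted_graph :: "('v::finite \<Rightarrow> 'v \<Rightarrow> bool) \<Rightarrow> ('v \<Rightarrow> 'v \<Rightarrow> real) \<Rightarrow> bool" where
  "weighted_graph E w \<longleftrightarrow>
     (\<forall>x. \<not> E x x) \<and> (\<forall>x y. E x y \<longrightarrow> E y x) \<and>
     (\<forall>x y. E x y \<longrightarrow> w x y = w y x \<and> w x y > 0) \<and>
     (\<forall>x y. E\<^sup>*\<^sup>* x y)"

definition graph_laplacian :: "('v::finite \<Rightarrow> 'v \<Rightarrow> bool) \<Rightarrow> ('v \<Rightarrow> 'v \<Rightarrow> real) \<Rightarrow> ('v \<Rightarrow> real) \<Rightarrow> 'v \<Rightarrow> real" where
  "graph_laplacian E w F x = (\<Sum>y\<in>{y. E x y}. w x y * (F y - F x))"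

definition svirs_solution ::
  "('v::finite \<Rightarrow> 'v \<Rightarrow> bool) \<Rightarrow> ('v \<Rightarrow> 'v \<Rightarrow> real) \<Rightarrow>
   real \<Rightarrow> real \<Rightarrow> real \<Rightarrow> real \<Rightarrow> real \<Rightarrow> real \<Rightarrow> real \<Rightarrow> real \<Rightarrow> real \<Rightarrow> real \<Rightarrow>
   ('v \<Rightarrow> real \<Rightarrow> real) \<Rightarrow> ('v \<Rightarrow> real \<Rightarrow> real) \<Rightarrow> ('v \<Rightarrow> real \<Rightarrow> real) \<Rightarrow> ('v \<Rightarrow> real \<Rightarrow> real) \<Rightarrow> bool" where
  "svirs_solution E w N r \<mu> p \<beta> \<xi> \<eta> \<sigma> \<gamma> \<epsilon> S V I R \<longleftrightarrow>
    (\<forall>x. \<forall>t\<ge>0.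
      ((\<lambda>t. S x t) has_real_derivative
         (\<epsilon> * graph_laplacian E w (\<lambda>y. S y t) x
          + \<mu> * (1 - r) * N - (\<mu> + p) * S x t - \<beta> * S x t * I x t + \<xi> * V x t + \<eta> * R x t))
        (at t within {0..}) \<and>
      ((\<lambda>t. V x t) has_real_derivative
         (\<epsilon> * graph_laplacian E w (\<lambda>y. V y t) x
          + \<mu> * r * N + p * S x t - \<beta> * \<sigma> * V x t * I x t - (\<mu> + \<xi>) * V x t))
        (at t within {0..}) \<and>
      ((\<lambda>t. I x t) has_real_derivative
         (\<epsilon> * graph_laplacian E w (\<lambda>y. I y t) x
          + \<beta> * S x t * I x t + \<beta> * \<sigma> * V x t * I x t - (\<mu> + \<gamma>) * I x t))
        (at t within {0..}) \<and>
      ((\<lambda>t. R x t) has_real_derivative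
         (\<epsilon> * graph_laplacian E w (\<lambda>y. R y t) x
          + \<gamma> * I x t - (\<mu> + \<eta>) * R x t))
        (at t within {0..}))"

definition const_equilibrium ::
  "('v::finite \<Rightarrow> 'v \<Rightarrow> bool) \<Rightarrow> ('v \<Rightarrow> 'v \<Rightarrow> real) \<Rightarrow>
   real \<Rightarrow> real \<Rightarrow> real \<Rightarrow> real \<Rightarrow> real \<Rightarrow> real \<Rightarrow> real \<Rightarrow> real \<Rightarrow> real \<Rightarrow> real \<Rightarrow>
   real \<times> real \<times> real \<times> real \<Rightarrow> bool" where
  "const_equilibrium E w N r \<mu> p \<beta> \<xi> \<eta> \<sigma> \<gamma> \<epsilon> e \<longleftrightarrow>
    (case e of (S0, V0, I0, R0) \<Rightarrow>
      svirs_solution E w N r \<mu> p \<beta> \<xi> \<eta> \<sigma> \<gamma> \<epsilon>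
        (\<lambda>x t. S0) (\<lambda>x t. V0) (\<lambda>x t. I0) (\<lambda>x t. R0))"

definition basic_repr_number :: "real \<Rightarrow> real \<Rightarrow> real \<Rightarrow> real \<Rightarrow> real \<Rightarrow> real \<Rightarrow> real \<Rightarrow> real \<Rightarrow> real" where
  "basic_repr_number N r \<mu> p \<beta> \<xi> \<sigma> \<gamma> =
     \<beta> * ((\<xi> + (1 - r) * \<mu>) + \<sigma> * (p + \<mu> * r)) * N / ((\<gamma> + \<mu>) * (\<mu> + p + \<xi>))"

end

theory Submission
  imports Defs
begin

text \<open>The Laplacian vanishes on spatially constant states, so constant equilibria are exactly
the solutions of the algebraic steady-state system. When \<open>I > 0\<close>, the \<open>I\<close>-equation forces
\<open>S + \<sigma> V = (\<mu> + \<gamma>) / \<beta>\<close>, the \<open>R\<close>-equation gives \<open>R = \<gamma> I / (\<mu> + \<eta>)\<close>, and adding all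
equations shows that the total population is \<open>N\<close>. Everything is then a function of \<open>V\<close>,
and the \<open>V\<close>-equation becomes a quadratic with nonnegative leading coefficient. The condition
\<open>\<R>\<^sub>0 > 1\<close> says precisely that this quadratic is negative at the value of \<open>V\<close> where \<open>I\<close> would
vanish, while it is nonnegative at \<open>V = 0\<close>; hence it has exactly one root in the range
where \<open>I > 0\<close>.\<close>

lemma graph_laplacian_const [simp]: "graph_laplacian E w (\<lambda>_. c) x = 0"
  unfolding graph_laplacian_def by simp

lemma has_field_derivative_const_iff:
  assumes "at t within S \<noteq> bot"
  shows "((\<lambda>_. c) has_field_derivative D) (at t within S) \<longleftrightarrow> D = 0"
  using has_field_derivative_unique[OF _ DERIV_const assms] DERIV_const by blast

definition svirs_steady_state ::
  "real \<Rightarrow> real \<Rightarrow> real \<Rightarrow> real \<Rightarrow> real \<Rightarrow> real \<Rightarrow> real \<Rightarrow> real \<Rightarrow> real \<Rightarrow>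
   real \<times> real \<times> real \<times> real \<Rightarrow> bool" where
  "svirs_steady_state N r \<mu> p \<beta> \<xi> \<eta> \<sigma> \<gamma> e \<longleftrightarrow>
    (case e of (S, V, I, R) \<Rightarrow>
      \<mu> * (1 - r) * N - (\<mu> + p) * S - \<beta> * S * I + \<xi> * V + \<eta> * R = 0 \<and>
      \<mu> * r * N + p * S - \<beta> * \<sigma> * V * I - (\<mu> + \<xi>) * V = 0 \<and>
      \<beta> * S * I + \<beta> * \<sigma> * V * I - (\<mu> + \<gamma>) * I = 0 \<and>
      \<gamma> * I - (\<mu> + \<eta>) * R = 0)"

lemma const_equilibrium_iff_steady_state:
  "const_equilibrium E w N r \<mu> p \<beta> \<xi> \<eta> \<sigma> \<gamma> \<epsilon> e \<longleftrightarrow> svirs_steady_state N r \<mu> p \<beta> \<xi> \<eta> \<sigma> \<gamma> e"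
proof -
  have "at 0 within {0::real..} \<noteq> bot"
    by (simp add: at_within_Ici_at_right)
  then show ?thesis
    by (cases e) (auto simp: const_equilibrium_def svirs_solution_def svirs_steady_state_def
        has_field_derivative_const_iff dest: spec[of _ 0])
qed

lemma quadratic_roots_below_unique:
  fixes q :: "real \<Rightarrow> real"
  assumes q: "\<And>t. q t = a * t\<^sup>2 + b * t + c" and "a \<ge> 0" and "q z < 0"
    and "q x = 0" "x < z" and "q y = 0" "y < z"
  shows "x = y"
proof (rule ccontr)
  assume "x \<noteq> y"
  have "(x - y) * (a * (x + y) + b) = q x - q y"
    unfolding q by (simp add: algebra_simps power2_eq_square)
  with \<open>x \<noteq> y\<close> assms(4,6) have b: "b = - a * (x + y)" by simp
  with assms(4) have c: "c = a * x * y" by (simp add: q algebra_simps power2_eq_square)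
  have "q z = a * (z - x) * (z - y)"
    by (simp add: q b c algebra_simps power2_eq_square)
  also have "\<dots> \<ge> 0" using assms(2,5,7) by simp
  finally show False using assms(3) by simp
qed

locale svirs_parameters =
  fixes N r \<mu> p \<beta> \<xi> \<eta> \<sigma> \<gamma> :: real
  assumes N_pos: "N > 0" and mu_pos: "\<mu> > 0" and beta_pos: "\<beta> > 0"
    and r_nonneg: "0 \<le> r" and p_nonneg: "0 \<le> p" and xi_nonneg: "0 \<le> \<xi>"
    and eta_nonneg: "0 \<le> \<eta>" and gamma_nonneg: "0 \<le> \<gamma>"
    and sigma_nonneg: "0 \<le> \<sigma>" and sigma_le_1: "\<sigma> \<le> 1"
begin

abbreviation steady_state :: "real \<times> real \<times> real \<times> real \<Rightarrow> bool" where
  "steady_state \<equiv> svirs_steady_state N r \<mu> p \<beta> \<xi> \<eta> \<sigma> \<gamma>"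

definition infection_threshold :: real where
  "infection_threshold = (\<mu> + \<gamma>) / \<beta>"

text \<open>At a steady state \<open>R = \<gamma> I / (\<mu> + \<eta>)\<close>, so \<open>I\<close> is this share of \<open>I + R\<close>.\<close>

definition infected_share :: real where
  "infected_share = (\<mu> + \<eta>) / (\<mu> + \<eta> + \<gamma>)"

definition endemic_I :: "real \<Rightarrow> real" where
  "endemic_I V = infected_share * (N - infection_threshold - (1 - \<sigma>) * V)"

definition endemic_point :: "real \<Rightarrow> real \<times> real \<times> real \<times> real" where
  "endemic_point V =
     (infection_threshold - \<sigma> * V, V, endemic_I V, \<gamma> * endemic_I V / (\<mu> + \<eta>))"

definition vaccinated_residual :: "real \<Rightarrow> real" where
  "vaccinated_residual V =
     \<mu> * r * N + p * (infection_threshold - \<sigma> * V) - \<beta> * \<sigma> * V * endemic_I V - (\<mu> + \<xi>) * V"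

lemma infection_threshold_pos: "infection_threshold > 0"
  using mu_pos beta_pos gamma_nonneg by (simp add: infection_threshold_def)

lemma infected_share_pos: "infected_share > 0"
  using mu_pos eta_nonneg gamma_nonneg by (simp add: infected_share_def)

text \<open>The left-hand sides of the four equations add up to \<open>\<mu> (N - S - V - I - R)\<close>.\<close>

lemma steady_state_iff_total:
  "steady_state (S, V, I, R) \<longleftrightarrow>
     S + V + I + R = N \<and>
     \<mu> * r * N + p * S - \<beta> * \<sigma> * V * I - (\<mu> + \<xi>) * V = 0 \<and>
     \<beta> * S * I + \<beta> * \<sigma> * V * I - (\<mu> + \<gamma>) * I = 0 \<and>
     \<gamma> * I - (\<mu> + \<eta>) * R = 0"
proof -
  have "\<mu> * (1 - r) * N - (\<mu> + p) * S - \<beta> * S * I + \<xi> * V + \<eta> * R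
      = \<mu> * (N - (S + V + I + R))
        - (\<mu> * r * N + p * S - \<beta> * \<sigma> * V * I - (\<mu> + \<xi>) * V)
        - (\<beta> * S * I + \<beta> * \<sigma> * V * I - (\<mu> + \<gamma>) * I)
        - (\<gamma> * I - (\<mu> + \<eta>) * R)"
    by (simp add: algebra_simps)
  moreover have "\<mu> * (N - (S + V + I + R)) = 0 \<longleftrightarrow> S + V + I + R = N"
    using mu_pos by auto
  ultimately show ?thesis
    unfolding svirs_steady_state_def prod.case by linarith
qed

lemma steady_state_endemic_point:
  assumes "vaccinated_residual V = 0"
  shows "steady_state (endemic_point V)"
proof -
  define S I R where "S = infection_threshold - \<sigma> * V" and "I = endemic_I V"
    and "R = \<gamma> * endemic_I V / (\<mu> + \<eta>)"
  have "\<mu> + \<eta> > 0" using mu_pos eta_nonneg by simp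
  have "(\<mu> + \<eta> + \<gamma>) * I = (\<mu> + \<eta>) * (N - infection_threshold - (1 - \<sigma>) * V)"
    using \<open>\<mu> + \<eta> > 0\<close> gamma_nonneg by (simp add: I_def endemic_I_def infected_share_def)
  then have "I + R = N - infection_threshold - (1 - \<sigma>) * V"
    using \<open>\<mu> + \<eta> > 0\<close> by (simp add: R_def I_def[symmetric] field_simps)
  then have "S + V + I + R = N" by (simp add: S_def algebra_simps)
  moreover have "\<beta> * S * I + \<beta> * \<sigma> * V * I - (\<mu> + \<gamma>) * I = 0"
    using beta_pos by (simp add: S_def infection_threshold_def field_simps)
  moreover have "\<gamma> * I - (\<mu> + \<eta>) * R = 0"
    using \<open>\<mu> + \<eta> > 0\<close> by (simp add: R_def I_def)
  moreover have "\<mu> * r * N + p * S - \<beta> * \<sigma> * V * I - (\<mu> + \<xi>) * V = 0"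
    using assms by (simp add: vaccinated_residual_def S_def I_def)
  ultimately show ?thesis
    unfolding endemic_point_def steady_state_iff_total S_def I_def R_def by simp
qed

lemma endemic_steady_state_eq_endemic_point:
  assumes "steady_state (S, V, I, R)" and "I > 0"
  shows "(S, V, I, R) = endemic_point V" and "vaccinated_residual V = 0"
proof -
  note eqs = assms(1)[unfolded steady_state_iff_total]
  have "I * (\<beta> * (S + \<sigma> * V) - (\<mu> + \<gamma>)) = 0"
    using eqs by (simp add: algebra_simps)
  then have "\<beta> * (S + \<sigma> * V) = \<mu> + \<gamma>"
    using assms(2) by simp
  then have S: "S = infection_threshold - \<sigma> * V"
    using beta_pos by (simp add: infection_threshold_def field_simps)
  have "\<mu> + \<eta> > 0" using mu_pos eta_nonneg by simp
  then have R: "R = \<gamma> * I / (\<mu> + \<eta>)"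
    using eqs by (simp add: field_simps)
  have I: "I = endemic_I V"
    using eqs \<open>\<mu> + \<eta> > 0\<close> gamma_nonneg unfolding S R endemic_I_def infected_share_def
    by (simp add: field_simps)
  show "(S, V, I, R) = endemic_point V"
    unfolding endemic_point_def using S R I by simp
  show "vaccinated_residual V = 0"
    using eqs unfolding vaccinated_residual_def S I by simp
qed

lemma endemic_steady_state_iff:
  "I > 0 \<and> steady_state (S, V, I, R) \<longleftrightarrow>
     (S, V, I, R) = endemic_point V \<and> vaccinated_residual V = 0 \<and> endemic_I V > 0"
  using endemic_steady_state_eq_endemic_point steady_state_endemic_point
  by (auto simp: endemic_point_def)

lemma vaccinated_residual_quadratic:
  obtains a b c where "a \<ge> 0" and "\<And>V. vaccinated_residual V = a * V\<^sup>2 + b * V + c"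
proof
  show "\<beta> * \<sigma> * (1 - \<sigma>) * infected_share \<ge> 0"
    using beta_pos sigma_nonneg sigma_le_1 infected_share_pos by simp
  show "vaccinated_residual V =
      \<beta> * \<sigma> * (1 - \<sigma>) * infected_share * V\<^sup>2
      + - (p * \<sigma> + \<mu> + \<xi> + \<beta> * \<sigma> * infected_share * (N - infection_threshold)) * V
      + (\<mu> * r * N + p * infection_threshold)" for V
    unfolding vaccinated_residual_def endemic_I_def by (simp add: algebra_simps power2_eq_square)
qed

lemma endemic_I_pos_iff:
  "\<sigma> < 1 \<Longrightarrow> endemic_I V > 0 \<longleftrightarrow> V < (N - infection_threshold) / (1 - \<sigma>)"
  using infected_share_pos
  by (simp add: endemic_I_def zero_less_mult_iff pos_less_divide_eq mult.commute)

end

locale svirs_supercritical = svirs_parameters +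
  assumes R0_gt_1: "basic_repr_number N r \<mu> p \<beta> \<xi> \<sigma> \<gamma> > 1"
begin

lemma R0_gt_1_threshold:
  "infection_threshold * (\<mu> + p + \<xi>) < N * (\<xi> + (1 - r) * \<mu> + \<sigma> * (p + \<mu> * r))"
proof -
  have "(\<gamma> + \<mu>) * (\<mu> + p + \<xi>) > 0"
    using mu_pos p_nonneg xi_nonneg gamma_nonneg by (simp add: add_nonneg_pos)
  then have "(\<mu> + \<gamma>) * (\<mu> + p + \<xi>) < \<beta> * (N * (\<xi> + (1 - r) * \<mu> + \<sigma> * (p + \<mu> * r)))"
    using R0_gt_1 unfolding basic_repr_number_def
    by (simp add: pos_less_divide_eq algebra_simps)
  then show ?thesis
    using beta_pos by (simp add: infection_threshold_def divide_less_eq mult.commute)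
qed

lemma infection_threshold_lt_N: "infection_threshold < N"
proof -
  have "\<sigma> * (p + \<mu> * r) \<le> p + \<mu> * r"
    using sigma_nonneg sigma_le_1 p_nonneg mu_pos r_nonneg by (simp add: mult_left_le_one_le)
  then have "N * (\<xi> + (1 - r) * \<mu> + \<sigma> * (p + \<mu> * r)) \<le> N * (\<mu> + p + \<xi>)"
    using N_pos by (intro mult_left_mono) (auto simp: algebra_simps)
  with R0_gt_1_threshold have "infection_threshold * (\<mu> + p + \<xi>) < N * (\<mu> + p + \<xi>)"
    by linarith
  then show ?thesis
    using mu_pos p_nonneg xi_nonneg by simp
qed

lemma vaccinated_residual_linear_if_sigma_1:
  assumes "\<sigma> = 1"
  obtains d where "d > 0"
    and "\<And>V. vaccinated_residual V = \<mu> * r * N + p * infection_threshold - d * V"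
proof
  show "p + \<mu> + \<xi> + \<beta> * infected_share * (N - infection_threshold) > 0"
    using mu_pos p_nonneg xi_nonneg beta_pos infected_share_pos infection_threshold_lt_N
    by (simp add: add_pos_nonneg)
  show "vaccinated_residual V = \<mu> * r * N + p * infection_threshold
      - (p + \<mu> + \<xi> + \<beta> * infected_share * (N - infection_threshold)) * V" for V
    using assms unfolding vaccinated_residual_def endemic_I_def by (simp add: algebra_simps)
qed

text \<open>At this value of \<open>V\<close> the infected compartment \<open>endemic_I\<close> vanishes.\<close>

lemma vaccinated_residual_neg_at_I_zero:
  assumes "\<sigma> < 1"
  shows "vaccinated_residual ((N - infection_threshold) / (1 - \<sigma>)) < 0"
proof -
  define V where "V = (N - infection_threshold) / (1 - \<sigma>)"
  have V: "(1 - \<sigma>) * V = N - infection_threshold"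
    using assms by (simp add: V_def)
  then have "endemic_I V = 0" by (simp add: endemic_I_def)
  then have "(1 - \<sigma>) * vaccinated_residual V
      = (1 - \<sigma>) * (\<mu> * r * N + p * infection_threshold) - (p * \<sigma> + \<mu> + \<xi>) * ((1 - \<sigma>) * V)"
    by (simp add: vaccinated_residual_def algebra_simps)
  also have "\<dots> = infection_threshold * (\<mu> + p + \<xi>) - N * (\<xi> + (1 - r) * \<mu> + \<sigma> * (p + \<mu> * r))"
    unfolding V by (simp add: algebra_simps)
  finally have "(1 - \<sigma>) * vaccinated_residual V < 0"
    using R0_gt_1_threshold by simp
  then show ?thesis
    using assms by (simp add: V_def mult_less_0_iff)
qed

lemma vaccinated_residual_root_exists: "\<exists>V. vaccinated_residual V = 0 \<and> endemic_I V > 0"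
proof (cases "\<sigma> < 1")
  case True
  define V\<^sub>0 where "V\<^sub>0 = (N - infection_threshold) / (1 - \<sigma>)"
  have "V\<^sub>0 > 0" using True infection_threshold_lt_N by (simp add: V\<^sub>0_def)
  have "vaccinated_residual 0 \<ge> 0"
    using mu_pos r_nonneg p_nonneg infection_threshold_pos infection_threshold_lt_N
    by (simp add: vaccinated_residual_def)
  moreover have "vaccinated_residual V\<^sub>0 < 0"
    using vaccinated_residual_neg_at_I_zero[OF True] by (simp add: V\<^sub>0_def)
  moreover have "isCont vaccinated_residual x" for x
    unfolding vaccinated_residual_def[abs_def] endemic_I_def by (intro continuous_intros)
  ultimately obtain V where "0 \<le> V" "V \<le> V\<^sub>0" "vaccinated_residual V = 0"
    using IVT2[of vaccinated_residual V\<^sub>0 0 0] \<open>V\<^sub>0 > 0\<close> by auto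
  moreover have "V \<noteq> V\<^sub>0" using \<open>vaccinated_residual V\<^sub>0 < 0\<close> \<open>vaccinated_residual V = 0\<close> by auto
  ultimately have "V < V\<^sub>0" "vaccinated_residual V = 0" by simp_all
  then show ?thesis
    using endemic_I_pos_iff[OF True] unfolding V\<^sub>0_def by blast
next
  case False
  with sigma_le_1 have "\<sigma> = 1" by simp
  then obtain d where "d > 0"
    and "\<And>V. vaccinated_residual V = \<mu> * r * N + p * infection_threshold - d * V"
    using vaccinated_residual_linear_if_sigma_1 by metis
  then have "vaccinated_residual ((\<mu> * r * N + p * infection_threshold) / d) = 0"
    by simp
  moreover have "endemic_I V > 0" for V
    unfolding endemic_I_def using \<open>\<sigma> = 1\<close> infected_share_pos infection_threshold_lt_N by simp
  ultimately show ?thesis by blast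
qed

lemma vaccinated_residual_root_unique:
  assumes "vaccinated_residual V\<^sub>1 = 0" "endemic_I V\<^sub>1 > 0"
    and "vaccinated_residual V\<^sub>2 = 0" "endemic_I V\<^sub>2 > 0"
  shows "V\<^sub>1 = V\<^sub>2"
proof (cases "\<sigma> < 1")
  case True
  obtain a b c where "a \<ge> 0" and q: "\<And>V. vaccinated_residual V = a * V\<^sup>2 + b * V + c"
    using vaccinated_residual_quadratic by metis
  define V\<^sub>0 where "V\<^sub>0 = (N - infection_threshold) / (1 - \<sigma>)"
  have neg: "vaccinated_residual V\<^sub>0 < 0" and below: "V\<^sub>1 < V\<^sub>0" "V\<^sub>2 < V\<^sub>0"
    using vaccinated_residual_neg_at_I_zero[OF True] assms(2,4) endemic_I_pos_iff[OF True]
    by (simp_all add: V\<^sub>0_def)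
  show ?thesis
    using quadratic_roots_below_unique[OF q \<open>a \<ge> 0\<close> neg assms(1) below(1) assms(3) below(2)] .
next
  case False
  with sigma_le_1 have "\<sigma> = 1" by simp
  then obtain d where "d > 0"
    and "\<And>V. vaccinated_residual V = \<mu> * r * N + p * infection_threshold - d * V"
    using vaccinated_residual_linear_if_sigma_1 by metis
  with assms(1,3) show ?thesis by simp
qed

lemma unique_endemic_steady_state: "\<exists>!e. fst (snd (snd e)) > 0 \<and> steady_state e"
proof -
  obtain V where V: "vaccinated_residual V = 0" "endemic_I V > 0"
    using vaccinated_residual_root_exists by blast
  show ?thesis
  proof (rule ex1I[of _ "endemic_point V"])
    show "fst (snd (snd (endemic_point V))) > 0 \<and> steady_state (endemic_point V)"
      using V steady_state_endemic_point by (simp add: endemic_point_def)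
  next
    fix e assume "fst (snd (snd e)) > 0 \<and> steady_state e"
    moreover obtain S V' I R where e: "e = (S, V', I, R)" by (cases e)
    ultimately have "e = endemic_point V'" "vaccinated_residual V' = 0" "endemic_I V' > 0"
      using endemic_steady_state_iff by auto
    with V show "e = endemic_point V"
      using vaccinated_residual_root_unique by blast
  qed
qed

end

theorem mainTheorem1:
  fixes E :: "'v::finite \<Rightarrow> 'v \<Rightarrow> bool" and w :: "'v \<Rightarrow> 'v \<Rightarrow> real"
    and N r \<mu> p \<beta> \<xi> \<eta> \<sigma> \<gamma> \<epsilon> :: real
  assumes "weighted_graph E w"
    and "N > 0" and "0 < r" and "r < 1" and "\<mu> > 0" and "0 \<le> p" and "p \<le> 1"
    and "\<beta> > 0" and "\<xi> \<ge> 0" and "\<eta> \<ge> 0" and "0 \<le> \<sigma>" and "\<sigma> \<le> 1"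
    and "\<gamma> \<ge> 0" and "0 < \<epsilon>" and "\<epsilon> \<le> 1"
    and "basic_repr_number N r \<mu> p \<beta> \<xi> \<sigma> \<gamma> > 1"
  shows "\<exists>!e. fst (snd (snd e)) > 0 \<and> const_equilibrium E w N r \<mu> p \<beta> \<xi> \<eta> \<sigma> \<gamma> \<epsilon> e"
proof -
  interpret svirs_supercritical N r \<mu> p \<beta> \<xi> \<eta> \<sigma> \<gamma>
    using assms by unfold_locales auto
  show ?thesis
    unfolding const_equilibrium_iff_steady_state by (rule unique_endemic_steady_state)
qed

end
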